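(* Let $(\mathcal{S},\mathcal{R})$ be a homogeneous positive presentation, and let $\kappa$ be the cardinality of $\mathcal{S}$. Then every $r$-completing sequence starting from $(\mathcal{S},\mathcal{R})$ has length less than $\sup(\kappa^+,\aleph_1)$; every presentation occurring in such a sequence defines the same congruence on $\mathcal{S}^*$ (hence the same monoid and group) as $(\mathcal{S},\mathcal{R})$; and every $r$-completing sequence starting from $(\mathcal{S},\mathcal{R})$ that cannot be extended to a longer $r$-completing sequence ends with an $r$-complete presentation equivalent to $(\mathcal{S},\mathcal{R})$.
   Context: A positive presentation is a pair $(\mathcal{S},\mathcal{R})$ where $\mathcal{S}$ is a nonempty set of letters and $\mathcal{R}$ is a family of relations $u=v$, i.e. unordered pairs $\{u,v\}$ of nonempty words in the free monoid $\mathcal{S}^*$. $\varepsilon$ denotes the empty word; $\equiv^{\mathcal{R}}$ is the smallest congruence on $\mathcal{S}^*$ containing all pairs of $\mathcal{R}$. Let $\mathcal{S}^{-1}=\{s^{-1}:s\in\mathcal{S}\}$ be a disjoint copy of $\mathcal{S}$; for $u\in\mathcal{S}^*$, $u^{-1}$ is obtained by reversing the order of the letters of $u$ and replacing each $s$ by $s^{-1}$. Right reversing relative to $\mathcal{R}$: for words $\mathbf{w},\mathbf{w}'$ on $\mathcal{S}\cup\mathcal{S}^{-1}$ we write $\mathbf{w}\curvearrowright_r^{\mathcal{R}}\mathbf{w}'$ if $\mathbf{w}'$ is obtained from $\mathbf{w}$ by a finite (possibly empty) sequence of steps, each of which either deletes a subword $u^{-1}u$ with $u\in\mathcal{S}^*$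 nonempty, or replaces a subword $u^{-1}v$ with $u,v\in\mathcal{S}^*$ nonempty by a word $v'u'^{-1}$ with $u',v'\in\mathcal{S}^*$ such that $uv'=vu'$ is a relation of $\mathcal{R}$. $(\mathcal{S},\mathcal{R})$ is $r$-complete if for all $u,v,u',v'\in\mathcal{S}^*$ with $uv'\equiv^{\mathcal{R}} vu'$ there exist $u'',v'',w\in\mathcal{S}^*$ with $u^{-1}v\curvearrowright_r^{\mathcal{R}} v''u''^{-1}$, $u'\equiv^{\mathcal{R}} u''w$ and $v'\equiv^{\mathcal{R}} v''w$. $(\mathcal{S},\mathcal{R})$ is homogeneous if there exist maps $\lambda,\mu$ from $\mathcal{S}^*$ to the ordinals, both constant on $\equiv^{\mathcal{R}}$-classes, with $\lambda(su)>\lambda(u)$ and $\mu(us)>\mu(u)$ for all $s\in\mathcal{S}$, $u\in\mathcal{S}^*$. A presentation $(\mathcal{S},\mathcal{R}')$ is a $1$-completion of $(\mathcal{S},\mathcal{R})$ if there exist letters $s,t,r\in\mathcal{S}$ and words $u,v\in\mathcal{S}^*$ with $\mathcal{R}'=\mathcal{R}\cup\{sv=tu\}$, $s^{-1}rr^{-1}t\curvearrowright_r^{\mathcal{R}}vu^{-1}$, but not $v^{-1}s^{-1}tu\curvearrowright_r^{\mathcal{R}}\varepsilon$. An $r$-completing sequence starting from $(\mathcal{S},\mathcal{R})$ is a sequence $(\mathcal{S},\mathcal{R}_\xi)_{\xi<\theta}$ indexed by an ordinal $\theta$ with $\mathcal{R}_0=\mathcal{R}$, such that $(\mathcal{S},\mathcal{R}_{\xi+1})$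 is a $1$-completion of $(\mathcal{S},\mathcal{R}_\xi)$ whenever $\xi+1<\theta$, and $\mathcal{R}_\xi=\bigcup_{\eta<\xi}\mathcal{R}_\eta$ for limit $\xi<\theta$. *)

theory Defs
  imports Main "HOL-Library.Uprod"
begin

text \<open>Words over the alphabet are lists; a relation u = v is an unordered pair
 (Upair u v). Signed letters: Pos s stands for s, Neg s for s inverse.\<close>

datatype 'a sletter = Pos 'a | Neg 'a

definition inv_word :: "'a list \<Rightarrow> 'a sletter list" where
  "inv_word u = map Neg (rev u)"

definition pos_word :: "'a list \<Rightarrow> 'a sletter list" where
  "pos_word u = map Pos u"

definition positive_presentation :: "'a set \<Rightarrow> 'a list uprod set \<Rightarrow> bool" where
  "positive_presentation S R \<longleftrightarrow> S \<noteq> {} \<and>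
     (\<forall>p\<in>R. \<forall>w\<in>set_uprod p. w \<noteq> [] \<and> w \<in> lists S)"

inductive pcong :: "'a list uprod set \<Rightarrow> 'a list \<Rightarrow> 'a list \<Rightarrow> bool" for R where
  base: "Upair u v \<in> R \<Longrightarrow> pcong R u v"
| refl: "pcong R u u"
| sym: "pcong R u v \<Longrightarrow> pcong R v u"
| trans: "pcong R u v \<Longrightarrow> pcong R v w \<Longrightarrow> pcong R u w"
| mult_left: "pcong R u v \<Longrightarrow> pcong R (w @ u) (w @ v)"
| mult_right: "pcong R u v \<Longrightarrow> pcong R (u @ w) (v @ w)"

definition rev_step :: "'a set \<Rightarrow> 'a list uprod set \<Rightarrow> 'a sletter list \<Rightarrow> 'a sletter list \<Rightarrow> bool" where
  "rev_step S R w w' \<longleftrightarrow>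
     (\<exists>x y u. u \<noteq> [] \<and> u \<in> lists S \<and>
        w = x @ inv_word u @ pos_word u @ y \<and> w' = x @ y) \<or>
     (\<exists>x y u v u' v'. u \<noteq> [] \<and> v \<noteq> [] \<and> u \<in> lists S \<and> v \<in> lists S \<and>
        u' \<in> lists S \<and> v' \<in> lists S \<and> Upair (u @ v') (v @ u') \<in> R \<and>
        w = x @ inv_word u @ pos_word v @ y \<and> w' = x @ pos_word v' @ inv_word u' @ y)"

definition reverses :: "'a set \<Rightarrow> 'a list uprod set \<Rightarrow> 'a sletter list \<Rightarrow> 'a sletter list \<Rightarrow> bool" where
  "reverses S R = (rev_step S R)\<^sup>*\<^sup>*"

definition r_complete :: "'a set \<Rightarrow> 'a list uprod set \<Rightarrow> bool" where
  "r_complete S R \<longleftrightarrow>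
     (\<forall>u\<in>lists S. \<forall>v\<in>lists S. \<forall>u'\<in>lists S. \<forall>v'\<in>lists S.
        pcong R (u @ v') (v @ u') \<longrightarrow>
        (\<exists>u''\<in>lists S. \<exists>v''\<in>lists S. \<exists>w\<in>lists S.
           reverses S R (inv_word u @ pos_word v) (pos_word v'' @ inv_word u'') \<and>
           pcong R u' (u'' @ w) \<and> pcong R v' (v'' @ w)))"

text \<open>Ordinal-valued maps are represented by maps into the field of a well-order r
 (a well-ordered set stands for an ordinal); strict order is r minus the diagonal.\<close>

definition homogeneous_via ::
  "'a set \<Rightarrow> 'a list uprod set \<Rightarrow> 'o rel \<Rightarrow> ('a list \<Rightarrow> 'o) \<Rightarrow> ('a list \<Rightarrow> 'o) \<Rightarrow> bool" where
  "homogeneous_via S R r lam mu \<longleftrightarrow> Well_order r \<and>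
     (\<forall>u\<in>lists S. lam u \<in> Field r \<and> mu u \<in> Field r) \<and>
     (\<forall>u\<in>lists S. \<forall>v\<in>lists S. pcong R u v \<longrightarrow> lam u = lam v \<and> mu u = mu v) \<and>
     (\<forall>s\<in>S. \<forall>u\<in>lists S.
        (lam u, lam (s # u)) \<in> r \<and> lam u \<noteq> lam (s # u) \<and>
        (mu u, mu (u @ [s])) \<in> r \<and> mu u \<noteq> mu (u @ [s]))"

definition one_completion :: "'a set \<Rightarrow> 'a list uprod set \<Rightarrow> 'a list uprod set \<Rightarrow> bool" where
  "one_completion S R R' \<longleftrightarrow>
     (\<exists>s\<in>S. \<exists>t\<in>S. \<exists>r\<in>S. \<exists>u\<in>lists S. \<exists>v\<in>lists S.
        R' = insert (Upair (s # v) (t # u)) R \<and>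
        reverses S R [Neg s, Pos r, Neg r, Pos t] (pos_word v @ inv_word u) \<and>
        \<not> reverses S R (inv_word v @ [Neg s, Pos t] @ pos_word u) [])"

text \<open>A sequence indexed by an ordinal theta is a map on the field of a
 well-order t (of order type theta).\<close>

definition wo_less :: "'i rel \<Rightarrow> 'i \<Rightarrow> 'i \<Rightarrow> bool" where
  "wo_less t a b \<longleftrightarrow> (a, b) \<in> t \<and> a \<noteq> b"

definition wo_is_zero :: "'i rel \<Rightarrow> 'i \<Rightarrow> bool" where
  "wo_is_zero t x \<longleftrightarrow> x \<in> Field t \<and> \<not> (\<exists>y. wo_less t y x)"

definition wo_is_succ :: "'i rel \<Rightarrow> 'i \<Rightarrow> 'i \<Rightarrow> bool" where
  "wo_is_succ t x y \<longleftrightarrow> wo_less t x y \<and> \<not> (\<exists>z. wo_less t x z \<and> wo_less t z y)"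

definition wo_is_limit :: "'i rel \<Rightarrow> 'i \<Rightarrow> bool" where
  "wo_is_limit t x \<longleftrightarrow> x \<in> Field t \<and> \<not> wo_is_zero t x \<and> \<not> (\<exists>y. wo_is_succ t y x)"

definition r_completing_seq ::
  "'a set \<Rightarrow> 'a list uprod set \<Rightarrow> 'i rel \<Rightarrow> ('i \<Rightarrow> 'a list uprod set) \<Rightarrow> bool" where
  "r_completing_seq S R t Rs \<longleftrightarrow> Well_order t \<and>
     (\<forall>x. wo_is_zero t x \<longrightarrow> Rs x = R) \<and>
     (\<forall>x y. wo_is_succ t x y \<longrightarrow> one_completion S (Rs x) (Rs y)) \<and>
     (\<forall>x. wo_is_limit t x \<longrightarrow> Rs x = (\<Union>y\<in>{y. wo_less t y x}. Rs y))"

definition seq_extends ::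
  "'i rel \<Rightarrow> ('i \<Rightarrow> 'b) \<Rightarrow> 'j rel \<Rightarrow> ('j \<Rightarrow> 'b) \<Rightarrow> bool" where
  "seq_extends t Rs t' Rs' \<longleftrightarrow>
     (\<exists>f. inj_on f (Field t) \<and> f ` Field t \<subset> Field t' \<and>
        (\<forall>a\<in>Field t. \<forall>b\<in>Field t. (a, b) \<in> t \<longleftrightarrow> (f a, f b) \<in> t') \<and>
        (\<forall>a\<in>Field t. \<forall>y. (y, f a) \<in> t' \<longrightarrow> y \<in> f ` Field t) \<and>
        (\<forall>a\<in>Field t. Rs' (f a) = Rs a))"

text \<open>Non-extendability: no r-completing sequence properly extends it. It suffices
 to consider index type 'i option (any proper extension restricts to one of
 length theta + 1, which fits into 'i option).\<close>

definition non_extendable ::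
  "'a set \<Rightarrow> 'a list uprod set \<Rightarrow> 'i rel \<Rightarrow> ('i \<Rightarrow> 'a list uprod set) \<Rightarrow> bool" where
  "non_extendable S R t Rs \<longleftrightarrow>
     \<not> (\<exists>(t' :: 'i option rel) Rs'. r_completing_seq S R t' Rs' \<and> seq_extends t Rs t' Rs')"

end

theory Submission
  imports Defs "HOL-Library.Countable_Set"
begin

text \<open>A 1-completion only adds a relation \<open>s v = t u\<close> that already holds: the reversing of
  \<open>s\<inverse> r r\<inverse> t\<close> to \<open>v u\<inverse>\<close> is realised by a reversing diagram, and the boundary of a diagram
  is a congruence. So all terms of an r-completing sequence define the same congruence. Every
  step adds a new pair of words and no relation is ever removed, so the index set injects into
  \<open>S\<^sup>* \<times> S\<^sup>*\<close>, which bounds the length by \<open>sup(\<kappa>\<^sup>+, \<aleph>\<^sub>1)\<close>.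

  A non-extendable sequence has a last term without 1-completion (otherwise \<open>R\<close>, the union of
  all terms, or a 1-completion of the last term could be appended), i.e. a last term satisfying
  the cube condition on letters. For such a presentation, every common multiple \<open>u x \<equiv> v y\<close> factors
  through the reversing diagram of \<open>u\<inverse> v\<close>: this is proved by induction on the homogeneity
  \<open>\<lambda>(u x)\<close>, splitting off the first letters of \<open>u\<close> and \<open>v\<close>; for single letters one follows a
  chain of rewriting steps and closes each step with the cube condition.\<close>

section \<open>Reversing diagrams\<close>

lemma inv_word_append [simp]: "inv_word (u @ v) = inv_word v @ inv_word u"
  by (simp add: inv_word_def)

lemma pos_word_append [simp]: "pos_word (u @ v) = pos_word u @ pos_word v"
  by (simp add: pos_word_def)

lemma inv_word_simps [simp]: "inv_word [] = []" "inv_word [s] = [Neg s]"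
  by (simp_all add: inv_word_def)

lemma pos_word_simps [simp]: "pos_word [] = []" "pos_word [s] = [Pos s]"
  by (simp_all add: pos_word_def)

lemma inv_word_Cons: "inv_word (s # u) = inv_word u @ [Neg s]"
  by (simp add: inv_word_def)

lemma pos_word_Cons: "pos_word (s # u) = Pos s # pos_word u"
  by (simp add: pos_word_def)

declare pcong.trans [trans]

text \<open>\<open>rev_diagram S R u v v' u'\<close> is a reversing diagram: \<open>u\<inverse> v\<close> reverses to
  \<open>v' u'\<inverse>\<close> through a grid of elementary cells (one letter against one letter),
  glued side by side (\<open>hcomp\<close>) and one above the other (\<open>vcomp\<close>).\<close>

inductive rev_diagram ::
  "'a set \<Rightarrow> 'a list uprod set \<Rightarrow> 'a list \<Rightarrow> 'a list \<Rightarrow> 'a list \<Rightarrow> 'a list \<Rightarrow> bool"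
  for S R where
  Nil_left: "v \<in> lists S \<Longrightarrow> rev_diagram S R [] v v []"
| Nil_right: "u \<in> lists S \<Longrightarrow> rev_diagram S R u [] [] u"
| cancel: "s \<in> S \<Longrightarrow> rev_diagram S R [s] [s] [] []"
| relation: "s \<in> S \<Longrightarrow> t \<in> S \<Longrightarrow> v' \<in> lists S \<Longrightarrow> u' \<in> lists S \<Longrightarrow>
    Upair (s # v') (t # u') \<in> R \<Longrightarrow> rev_diagram S R [s] [t] v' u'"
| hcomp: "rev_diagram S R u v1 v1' u1 \<Longrightarrow> rev_diagram S R u1 v2 v2' u2 \<Longrightarrow>
    rev_diagram S R u (v1 @ v2) (v1' @ v2') u2"
| vcomp: "rev_diagram S R u1 v v1 u1' \<Longrightarrow> rev_diagram S R u2 v1 v2 u2' \<Longrightarrow>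
    rev_diagram S R (u1 @ u2) v v2 (u1' @ u2')"

lemma rev_diagram_lists:
  "rev_diagram S R u v v' u' \<Longrightarrow> u \<in> lists S \<and> v \<in> lists S \<and> v' \<in> lists S \<and> u' \<in> lists S"
  by (induction rule: rev_diagram.induct) auto

lemma rev_diagram_pcong: "rev_diagram S R u v v' u' \<Longrightarrow> pcong R (u @ v') (v @ u')"
proof (induction rule: rev_diagram.induct)
  case (hcomp u v1 v1' u1 v2 v2' u2)
  have "pcong R (u @ v1' @ v2') (v1 @ u1 @ v2')"
    using pcong.mult_right[OF hcomp.IH(1), of v2'] by simp
  also have "pcong R (v1 @ u1 @ v2') (v1 @ v2 @ u2)"
    using pcong.mult_left[OF hcomp.IH(2), of v1] by simp
  finally show ?case by simp
next
  case (vcomp u1 v v1 u1' u2 v2 u2')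
  have "pcong R (u1 @ u2 @ v2) (u1 @ v1 @ u2')"
    using pcong.mult_left[OF vcomp.IH(2), of u1] by simp
  also have "pcong R (u1 @ v1 @ u2') (v @ u1' @ u2')"
    using pcong.mult_right[OF vcomp.IH(1), of u2'] by simp
  finally show ?case by simp
qed (auto intro: pcong.intros)

lemma rev_diagram_Nil_left_iff: "rev_diagram S R [] v v' u' \<longleftrightarrow> v' = v \<and> u' = [] \<and> v \<in> lists S"
proof -
  have "rev_diagram S R u v v' u' \<Longrightarrow> u = [] \<Longrightarrow> v' = v \<and> u' = []" for u
    by (induction rule: rev_diagram.induct) auto
  then show ?thesis
    using rev_diagram_lists rev_diagram.Nil_left by metis
qed

lemma rev_diagram_split_trivial:
  assumes "rev_diagram S R u v v' u'" "v1 = [] \<and> v2 = v \<or> v1 = v \<and> v2 = []"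
  shows "\<exists>v1' u1 v2'. rev_diagram S R u v1 v1' u1 \<and> rev_diagram S R u1 v2 v2' u' \<and> v' = v1' @ v2'"
proof -
  have "rev_diagram S R u [] [] u" "rev_diagram S R u' [] [] u'"
    using rev_diagram_lists[OF assms(1)] by (auto intro: rev_diagram.Nil_right)
  then show ?thesis
    using assms by auto
qed

lemma rev_diagram_split_top:
  "rev_diagram S R u (v1 @ v2) v' u2 \<Longrightarrow>
   \<exists>v1' u1 v2'. rev_diagram S R u v1 v1' u1 \<and> rev_diagram S R u1 v2 v2' u2 \<and> v' = v1' @ v2'"
proof (induction u "v1 @ v2" v' u2 arbitrary: v1 v2 rule: rev_diagram.induct)
  case (Nil_left v)
  then show ?case by (auto intro!: rev_diagram.Nil_left)
next
  case (Nil_right u)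
  then have "v1 = [] \<and> v2 = []"
    by simp
  then show ?case
    using rev_diagram_split_trivial[OF rev_diagram.Nil_right[OF \<open>u \<in> lists S\<close>]] by blast
next
  case (cancel s)
  then have "v1 = [] \<and> v2 = [s] \<or> v1 = [s] \<and> v2 = []"
    by (cases v1) auto
  then show ?case
    using rev_diagram_split_trivial[OF rev_diagram.cancel[OF \<open>s \<in> S\<close>]] by blast
next
  case (relation s t v' u')
  then have "v1 = [] \<and> v2 = [t] \<or> v1 = [t] \<and> v2 = []"
    by (cases v1) auto
  then show ?case
    using rev_diagram_split_trivial[OF rev_diagram.relation[OF relation.hyps(1-5)]] by blast
next
  case (hcomp u va va' u1 vb vb' u2)
  from hcomp.hyps(5) consider us where "va = v1 @ us" "v2 = us @ vb"
    | us where "v1 = va @ us" "vb = us @ v2"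
    unfolding append_eq_append_conv2 by metis
  then show ?case
  proof cases
    case 1
    with hcomp.hyps(2) obtain p1 q1 p2 where
      "rev_diagram S R u v1 p1 q1" "rev_diagram S R q1 us p2 u1" "va' = p1 @ p2"
      by blast
    then show ?thesis
      using 1 rev_diagram.hcomp[of S R q1 us p2 u1 vb vb' u2] hcomp.hyps(3) by fastforce
  next
    case 2
    with hcomp.hyps(4) obtain p1 q1 p2 where
      "rev_diagram S R u1 us p1 q1" "rev_diagram S R q1 v2 p2 u2" "vb' = p1 @ p2"
      by blast
    then show ?thesis
      using 2 rev_diagram.hcomp[of S R u va va' u1 us p1 q1] hcomp.hyps(1) by fastforce
  qed
next
  case (vcomp ua w ua' ub w' ub')
  obtain p1 q1 p2 where
    h1: "rev_diagram S R ua v1 p1 q1" "rev_diagram S R q1 v2 p2 ua'" "w = p1 @ p2"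
    using vcomp.hyps(2) by blast
  obtain r1 s1 r2 where
    h2: "rev_diagram S R ub p1 r1 s1" "rev_diagram S R s1 p2 r2 ub'" "w' = r1 @ r2"
    using vcomp.hyps(4) h1(3) by blast
  show ?case
    using rev_diagram.vcomp[OF h1(1) h2(1)] rev_diagram.vcomp[OF h1(2) h2(2)] h2(3) by blast
qed

lemma rev_diagram_transpose: "rev_diagram S R u v v' u' \<Longrightarrow> rev_diagram S R v u u' v'"
proof (induction rule: rev_diagram.induct)
  case (relation s t v' u')
  moreover have "Upair (t # u') (s # v') = Upair (s # v') (t # u')"
    by simp
  ultimately show ?case
    by (metis rev_diagram.relation)
qed (auto intro: rev_diagram.intros)

lemma rev_diagram_split_left:
  assumes "rev_diagram S R (u1 @ u2) v v2 u'"
  shows "\<exists>v1 u1' u2'. rev_diagram S R u1 v v1 u1' \<and> rev_diagram S R u2 v1 v2 u2' \<and> u' = u1' @ u2'"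
  using rev_diagram_split_top[OF rev_diagram_transpose[OF assms]] rev_diagram_transpose by blast

lemma rev_diagram_same: "u \<in> lists S \<Longrightarrow> rev_diagram S R u u [] []"
proof (induction u)
  case Nil
  then show ?case by (simp add: rev_diagram.Nil_left)
next
  case (Cons s u)
  then have "rev_diagram S R [s] (s # u) u []" "rev_diagram S R u u [] []"
    using rev_diagram.hcomp[OF rev_diagram.cancel[of s] rev_diagram.Nil_left[of u]] by auto
  from rev_diagram.vcomp[OF this] show ?case by simp
qed

lemma rev_diagram_same_append: "u \<in> lists S \<Longrightarrow> a \<in> lists S \<Longrightarrow> rev_diagram S R u (u @ a) a []"
  using rev_diagram.hcomp[OF rev_diagram_same rev_diagram.Nil_left] by simp

lemma rev_diagram_relation:
  assumes "u \<noteq> []" "v \<noteq> []" "u \<in> lists S" "v \<in> lists S" "u' \<in> lists S" "v' \<in> lists S"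
    and "Upair (u @ v') (v @ u') \<in> R"
  shows "rev_diagram S R u v v' u'"
proof -
  obtain s u1 t v1 where u: "u = s # u1" and v: "v = t # v1"
    using assms(1,2) by (cases u; cases v) auto
  have "rev_diagram S R [s] [t] (u1 @ v') (v1 @ u')"
    using assms u v by (intro rev_diagram.relation) auto
  moreover have "rev_diagram S R (v1 @ u') v1 [] u'"
    using assms v rev_diagram_transpose[OF rev_diagram_same_append[of v1 S u']] by auto
  ultimately have "rev_diagram S R [s] v (u1 @ v') u'"
    using v rev_diagram.hcomp by fastforce
  moreover have "rev_diagram S R u1 (u1 @ v') v' []"
    using assms u by (auto intro: rev_diagram_same_append)
  ultimately show ?thesis
    using u rev_diagram.vcomp by fastforce
qed

lemma rev_step_cancel:
  "u \<noteq> [] \<Longrightarrow> u \<in> lists S \<Longrightarrow> rev_step S R (x @ inv_word u @ pos_word u @ y) (x @ y)"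
  unfolding rev_step_def by blast

lemma rev_step_relation:
  "u \<noteq> [] \<Longrightarrow> v \<noteq> [] \<Longrightarrow> u \<in> lists S \<Longrightarrow> v \<in> lists S \<Longrightarrow> u' \<in> lists S \<Longrightarrow> v' \<in> lists S \<Longrightarrow>
   Upair (u @ v') (v @ u') \<in> R \<Longrightarrow>
   rev_step S R (x @ inv_word u @ pos_word v @ y) (x @ pos_word v' @ inv_word u' @ y)"
  unfolding rev_step_def by (intro disjI2) blast

lemma rev_step_append_context:
  assumes "rev_step S R w w'"
  shows "rev_step S R (x @ w @ y) (x @ w' @ y)"
  using assms unfolding rev_step_def[of S R w w']
proof (elim disjE exE conjE)
  fix x1 y1 u
  assume "u \<noteq> []" "u \<in> lists S" "w = x1 @ inv_word u @ pos_word u @ y1" "w' = x1 @ y1"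
  then show ?thesis
    using rev_step_cancel[of u S R "x @ x1" "y1 @ y"] by simp
next
  fix x1 y1 u v u' v'
  assume "u \<noteq> []" "v \<noteq> []" "u \<in> lists S" "v \<in> lists S" "u' \<in> lists S" "v' \<in> lists S"
    "Upair (u @ v') (v @ u') \<in> R" "w = x1 @ inv_word u @ pos_word v @ y1"
    "w' = x1 @ pos_word v' @ inv_word u' @ y1"
  then show ?thesis
    using rev_step_relation[of u v S u' v' R "x @ x1" "y1 @ y"] by simp
qed

lemma reverses_append_context:
  "reverses S R w w' \<Longrightarrow> reverses S R (x @ w @ y) (x @ w' @ y)"
  unfolding reverses_def
  by (induction rule: rtranclp_induct) (auto intro: rev_step_append_context rtranclp.rtrancl_into_rtrancl)

lemma reverses_trans [trans]: "reverses S R a b \<Longrightarrow> reverses S R b c \<Longrightarrow> reverses S R a c"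
  unfolding reverses_def by simp

lemma rev_diagram_reverses:
  "rev_diagram S R u v v' u' \<Longrightarrow> reverses S R (inv_word u @ pos_word v) (pos_word v' @ inv_word u')"
proof (induction rule: rev_diagram.induct)
  case (cancel s)
  then have "rev_step S R ([] @ inv_word [s] @ pos_word [s] @ []) ([] @ [])"
    by (intro rev_step_cancel) auto
  then show ?case
    unfolding reverses_def by simp
next
  case (relation s t v' u')
  then have "rev_step S R ([] @ inv_word [s] @ pos_word [t] @ []) ([] @ pos_word v' @ inv_word u' @ [])"
    by (intro rev_step_relation) auto
  then show ?case
    unfolding reverses_def by simp
next
  case (hcomp u v1 v1' u1 v2 v2' u2)
  have "reverses S R (inv_word u @ pos_word v1 @ pos_word v2) (pos_word v1' @ inv_word u1 @ pos_word v2)"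
    using reverses_append_context[OF hcomp.IH(1), of "[]" "pos_word v2"] by simp
  also have "reverses S R \<dots> (pos_word v1' @ pos_word v2' @ inv_word u2)"
    using reverses_append_context[OF hcomp.IH(2), of "pos_word v1'" "[]"] by simp
  finally show ?case by simp
next
  case (vcomp u1 v v1 u1' u2 v2 u2')
  have "reverses S R (inv_word u2 @ inv_word u1 @ pos_word v) (inv_word u2 @ pos_word v1 @ inv_word u1')"
    using reverses_append_context[OF vcomp.IH(1), of "inv_word u2" "[]"] by simp
  also have "reverses S R \<dots> (pos_word v2 @ inv_word u2' @ inv_word u1')"
    using reverses_append_context[OF vcomp.IH(2), of "[]" "inv_word u1'"] by simp
  finally show ?case by simp
qed (simp_all add: reverses_def)

text \<open>\<open>rev_eval S R w a c a' c'\<close> builds, letter by letter from the right of \<open>w\<close>, a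
  reversing diagram showing that \<open>w a c\<inverse>\<close> reverses to \<open>a' c'\<inverse>\<close>. Its invariance under
  reversing steps inside \<open>w\<close> shows that every reversing is captured by a diagram.\<close>

fun rev_eval ::
  "'a set \<Rightarrow> 'a list uprod set \<Rightarrow> 'a sletter list \<Rightarrow> 'a list \<Rightarrow> 'a list \<Rightarrow> 'a list \<Rightarrow> 'a list \<Rightarrow> bool"
  where
  "rev_eval S R [] a c a' c' \<longleftrightarrow> a' = a \<and> c' = c"
| "rev_eval S R (Pos s # w) a c a' c' \<longleftrightarrow> (\<exists>a1. rev_eval S R w a c a1 c' \<and> s \<in> S \<and> a' = s # a1)"
| "rev_eval S R (Neg s # w) a c a' c' \<longleftrightarrow>
    (\<exists>a1 c1 c0. rev_eval S R w a c a1 c1 \<and> rev_diagram S R [s] a1 a' c0 \<and> c' = c1 @ c0)"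

lemma rev_eval_append:
  "rev_eval S R (w1 @ w2) a c a' c' \<longleftrightarrow> (\<exists>a1 c1. rev_eval S R w2 a c a1 c1 \<and> rev_eval S R w1 a1 c1 a' c')"
proof (induction w1 arbitrary: a' c')
  case (Cons l w1)
  then show ?case by (cases l) (simp; blast)+
qed simp

lemma rev_eval_lists: "rev_eval S R w a c a' c' \<Longrightarrow> a \<in> lists S \<Longrightarrow> a' \<in> lists S"
proof (induction w arbitrary: a' c')
  case (Cons l w)
  then show ?case by (cases l) (auto dest!: Cons.IH dest: rev_diagram_lists)
qed simp

lemma rev_eval_pos_word: "rev_eval S R (pos_word v) a c a' c' \<longleftrightarrow> v \<in> lists S \<and> a' = v @ a \<and> c' = c"
  by (induction v arbitrary: a') (auto simp: pos_word_Cons)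

lemma rev_eval_inv_word:
  assumes "a \<in> lists S"
  shows "rev_eval S R (inv_word u) a c a' c' \<longleftrightarrow> (\<exists>c0. rev_diagram S R u a a' c0 \<and> c' = c @ c0)"
  using assms
proof (induction u arbitrary: a c c')
  case Nil
  then show ?case by (auto simp: rev_diagram_Nil_left_iff)
next
  case (Cons s u)
  have "rev_eval S R (inv_word (s # u)) a c a' c' \<longleftrightarrow>
    (\<exists>a1 c1. rev_diagram S R [s] a a1 c1 \<and> rev_eval S R (inv_word u) a1 (c @ c1) a' c')"
    by (auto simp: inv_word_Cons rev_eval_append)
  also have "\<dots> \<longleftrightarrow> (\<exists>a1 c1 c2. rev_diagram S R [s] a a1 c1 \<and> rev_diagram S R u a1 a' c2 \<and> c' = c @ c1 @ c2)"
    using Cons.IH rev_diagram_lists by (smt (verit) append.assoc)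
  also have "\<dots> \<longleftrightarrow> (\<exists>c0. rev_diagram S R (s # u) a a' c0 \<and> c' = c @ c0)"
    using rev_diagram_split_left[of S R "[s]" u] rev_diagram.vcomp[of S R "[s]" a _ _ u]
    by (smt (verit) append_Cons append_Nil)
  finally show ?case .
qed

lemma rev_eval_rev_step:
  assumes "rev_step S R w w1" "rev_eval S R w1 a c a' c'" "a \<in> lists S"
  shows "rev_eval S R w a c a' c'"
  using assms(1) unfolding rev_step_def
proof (elim disjE exE conjE)
  fix x y u
  assume u: "u \<noteq> []" "u \<in> lists S" and w: "w = x @ inv_word u @ pos_word u @ y" "w1 = x @ y"
  then obtain a1 c1 where y: "rev_eval S R y a c a1 c1" and x: "rev_eval S R x a1 c1 a' c'"
    using assms(2) by (auto simp: rev_eval_append)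
  have a1: "a1 \<in> lists S"
    using rev_eval_lists[OF y assms(3)] .
  have "rev_eval S R (pos_word u) a1 c1 (u @ a1) c1"
    using u by (simp add: rev_eval_pos_word)
  moreover have "rev_eval S R (inv_word u) (u @ a1) c1 a1 c1"
    using rev_eval_inv_word[of "u @ a1" S R u c1 a1 c1] rev_diagram_same_append[OF u(2) a1] u(2) a1
    by auto
  ultimately show "rev_eval S R w a c a' c'"
    using x y unfolding w(1) rev_eval_append by blast
next
  fix x y u v u' v'
  assume uv: "u \<noteq> []" "v \<noteq> []" "u \<in> lists S" "v \<in> lists S" "u' \<in> lists S" "v' \<in> lists S"
    "Upair (u @ v') (v @ u') \<in> R"
    and w: "w = x @ inv_word u @ pos_word v @ y" "w1 = x @ pos_word v' @ inv_word u' @ y"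
  then obtain a1 c1 a2 c0 where y: "rev_eval S R y a c a1 c1"
    and u': "rev_diagram S R u' a1 a2 c0" and x: "rev_eval S R x (v' @ a2) (c1 @ c0) a' c'"
    using assms(2) rev_eval_lists[OF _ assms(3)]
    by (auto simp: rev_eval_append rev_eval_pos_word rev_eval_inv_word)
  have "rev_diagram S R u (v @ a1) (v' @ a2) c0"
    using rev_diagram_relation[OF uv] u' by (rule rev_diagram.hcomp)
  then have "rev_eval S R (inv_word u) (v @ a1) c1 (v' @ a2) (c1 @ c0)"
    using uv rev_eval_lists[OF y assms(3)] rev_eval_inv_word[of "v @ a1" S R u c1] by auto
  moreover have "rev_eval S R (pos_word v) a1 c1 (v @ a1) c1"
    using uv by (simp add: rev_eval_pos_word)
  ultimately show "rev_eval S R w a c a' c'"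
    using x y unfolding w(1) rev_eval_append by blast
qed

lemma reverses_rev_eval:
  assumes "reverses S R w (pos_word v @ inv_word u)" "v \<in> lists S" "u \<in> lists S"
  shows "rev_eval S R w [] [] v u"
proof -
  have "rev_eval S R (pos_word v @ inv_word u) [] [] v u"
    using assms(2,3) rev_diagram.Nil_right[of u S R]
    by (auto simp: rev_eval_append rev_eval_pos_word rev_eval_inv_word)
  with assms(1) show ?thesis
    unfolding reverses_def
    by (induction rule: converse_rtranclp_induct) (auto intro: rev_eval_rev_step)
qed

lemma reverses_rev_diagram:
  assumes "reverses S R (inv_word u @ pos_word v) (pos_word v' @ inv_word u')" "v' \<in> lists S" "u' \<in> lists S"
  shows "rev_diagram S R u v v' u'"
  using reverses_rev_eval[OF assms] rev_eval_inv_word[of v S R u "[]" v' u']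
  by (auto simp: rev_eval_append rev_eval_pos_word)

lemma rev_diagram_grid:
  assumes "rev_diagram S R u1 v1 a b" "rev_diagram S R b v2 c d"
    and "rev_diagram S R u2 a e f" "rev_diagram S R f c g h"
  shows "rev_diagram S R (u1 @ u2) (v1 @ v2) (e @ g) (d @ h)"
  using rev_diagram.vcomp[OF rev_diagram.hcomp[OF assms(1,2)] rev_diagram.hcomp[OF assms(3,4)]] .

section \<open>Factorisation of common multiples through diagrams\<close>

definition positive_relations :: "'a set \<Rightarrow> 'a list uprod set \<Rightarrow> bool" where
  "positive_relations S R \<longleftrightarrow> (\<forall>p\<in>R. \<forall>w\<in>set_uprod p. w \<noteq> [] \<and> w \<in> lists S)"

lemma positive_presentation_relations: "positive_presentation S R \<Longrightarrow> positive_relations S R"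
  unfolding positive_presentation_def positive_relations_def by blast

lemma positive_relationsD:
  "positive_relations S R \<Longrightarrow> Upair a b \<in> R \<Longrightarrow> a \<noteq> [] \<and> a \<in> lists S \<and> b \<noteq> [] \<and> b \<in> lists S"
  unfolding positive_relations_def by fastforce

definition rewrite_step :: "'a list uprod set \<Rightarrow> 'a list \<Rightarrow> 'a list \<Rightarrow> bool" where
  "rewrite_step R a b \<longleftrightarrow> (\<exists>x y p q. Upair p q \<in> R \<and> a = x @ p @ y \<and> b = x @ q @ y)"

lemma rewrite_step_pcong: "rewrite_step R a b \<Longrightarrow> pcong R a b"
  unfolding rewrite_step_def by (auto intro: pcong.base pcong.mult_left pcong.mult_right)

lemma rewrites_pcong: "(rewrite_step R)\<^sup>*\<^sup>* a b \<Longrightarrow> pcong R a b"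
  by (induction rule: rtranclp_induct) (auto intro: pcong.refl pcong.trans rewrite_step_pcong)

lemma pcong_rewrites: "pcong R a b \<Longrightarrow> (rewrite_step R)\<^sup>*\<^sup>* a b"
proof (induction rule: pcong.induct)
  case (base u v)
  then have "rewrite_step R ([] @ u @ []) ([] @ v @ [])"
    unfolding rewrite_step_def by blast
  then show ?case by simp
next
  case (sym u v)
  have "rewrite_step R b a" if "rewrite_step R a b" for a b
    using that unfolding rewrite_step_def by (metis Upair_inject)
  with sym.IH show ?case
    by (induction rule: rtranclp_induct) (auto intro: converse_rtranclp_into_rtranclp)
next
  case (mult_left u v w)
  have "rewrite_step R (w @ a) (w @ b)" if "rewrite_step R a b" for a b
    using that unfolding rewrite_step_def by (metis append.assoc)
  with mult_left.IH show ?case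
    by (induction rule: rtranclp_induct) (auto intro: rtranclp.rtrancl_into_rtrancl)
next
  case (mult_right u v w)
  have "rewrite_step R (a @ w) (b @ w)" if "rewrite_step R a b" for a b
    using that unfolding rewrite_step_def by (metis append.assoc)
  with mult_right.IH show ?case
    by (induction rule: rtranclp_induct) (auto intro: rtranclp.rtrancl_into_rtrancl)
qed simp_all

lemma pcong_lists:
  assumes "positive_relations S R" "pcong R a b"
  shows "a \<in> lists S \<longleftrightarrow> b \<in> lists S"
  using assms(2) by induction (auto dest: positive_relationsD[OF assms(1)])

lemma pcong_subrelation:
  assumes "\<And>a b. Upair a b \<in> R1 \<Longrightarrow> pcong R2 a b" "pcong R1 u v"
  shows "pcong R2 u v"
  using assms(2) by induction (auto intro: assms(1) pcong.intros)

lemma pcong_mono: "R1 \<subseteq> R2 \<Longrightarrow> pcong R1 u v \<Longrightarrow> pcong R2 u v"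
  by (rule pcong_subrelation) (auto intro: pcong.base)

definition factors_through_diagram ::
  "'a set \<Rightarrow> 'a list uprod set \<Rightarrow> 'a list \<Rightarrow> 'a list \<Rightarrow> 'a list \<Rightarrow> 'a list \<Rightarrow> bool" where
  "factors_through_diagram S R u v x y \<longleftrightarrow>
     (\<exists>x0 y0 f. rev_diagram S R u v x0 y0 \<and> f \<in> lists S \<and> pcong R x (x0 @ f) \<and> pcong R y (y0 @ f))"

lemma factors_through_diagram_extend:
  assumes "factors_through_diagram S R u v a b" "g \<in> lists S" "pcong R x (a @ g)" "pcong R y (b @ g)"
  shows "factors_through_diagram S R u v x y"
proof -
  obtain a0 b0 f where "rev_diagram S R u v a0 b0" "f \<in> lists S"
    and "pcong R a (a0 @ f)" "pcong R b (b0 @ f)"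
    using assms(1) unfolding factors_through_diagram_def by blast
  moreover from this have "pcong R x (a0 @ f @ g)" "pcong R y (b0 @ f @ g)"
    using assms(3,4) pcong.mult_right pcong.trans by fastforce+
  ultimately show ?thesis
    using assms(2) unfolding factors_through_diagram_def by (metis append_in_lists_conv)
qed

lemma factors_through_diagram_if_rev_diagram_Nil:
  assumes "rev_diagram S R (u @ a) (v @ b) [] []"
  shows "factors_through_diagram S R u v a b"
proof -
  obtain v1 where u: "rev_diagram S R u (v @ b) v1 []" and a: "rev_diagram S R a v1 [] []"
    using rev_diagram_split_left[OF assms] by blast
  obtain a0 b0 f where d: "rev_diagram S R u v a0 b0" and b: "rev_diagram S R b0 b f []"
    and v1: "v1 = a0 @ f"
    using rev_diagram_split_top[OF u] by blast
  have "pcong R a (a0 @ f)" "pcong R b (b0 @ f)"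
    using rev_diagram_pcong[OF a] rev_diagram_pcong[OF b] v1 by (auto intro: pcong.sym)
  then show ?thesis
    using d rev_diagram_lists[OF b] unfolding factors_through_diagram_def by blast
qed

lemma factors_through_diagram_rewrite_step:
  assumes "positive_relations S R" "rewrite_step R (r # z) (t # q)" "r # z \<in> lists S" "t # q \<in> lists S"
  shows "factors_through_diagram S R [r] [t] z q"
proof -
  obtain x y a b where ab: "Upair a b \<in> R" "r # z = x @ a @ y" "t # q = x @ b @ y"
    using assms(2) unfolding rewrite_step_def by blast
  have "a \<noteq> []" "b \<noteq> []" "a \<in> lists S" "b \<in> lists S"
    using positive_relationsD[OF assms(1) ab(1)] by auto
  show ?thesis
  proof (cases x)
    case Nil
    then obtain a1 b1 where "a = r # a1" "z = a1 @ y" "b = t # b1" "q = b1 @ y"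
      using ab \<open>a \<noteq> []\<close> \<open>b \<noteq> []\<close> by (cases a; cases b) auto
    with ab(1) assms(3,4) have "rev_diagram S R [r] [t] a1 b1" "y \<in> lists S"
      by (auto intro: rev_diagram.relation)
    then show ?thesis
      using \<open>z = a1 @ y\<close> \<open>q = b1 @ y\<close> unfolding factors_through_diagram_def by (blast intro: pcong.refl)
  next
    case (Cons c x1)
    then have "r = t" "z = x1 @ a @ y" "q = x1 @ b @ y"
      using ab by auto
    then have "pcong R q z" "rev_diagram S R [r] [t] [] []"
      using ab(1) assms(3) pcong.sym rewrite_step_pcong unfolding rewrite_step_def
      by (blast, auto intro: rev_diagram.cancel)
    then show ?thesis
      using assms(3) pcong.refl[of R z] unfolding factors_through_diagram_def by fastforce
  qed
qed

definition r_complete_at :: "'a set \<Rightarrow> 'a list uprod set \<Rightarrow> 'a list \<Rightarrow> bool" where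
  "r_complete_at S R w \<longleftrightarrow>
     (\<forall>u\<in>lists S. \<forall>v\<in>lists S. \<forall>x\<in>lists S. \<forall>y\<in>lists S.
        pcong R (u @ x) w \<longrightarrow> pcong R (v @ y) w \<longrightarrow> factors_through_diagram S R u v x y)"

lemma r_complete_atD:
  "r_complete_at S R w \<Longrightarrow> u \<in> lists S \<Longrightarrow> v \<in> lists S \<Longrightarrow> x \<in> lists S \<Longrightarrow> y \<in> lists S \<Longrightarrow>
   pcong R (u @ x) w \<Longrightarrow> pcong R (v @ y) w \<Longrightarrow> factors_through_diagram S R u v x y"
  unfolding r_complete_at_def by blast

lemma r_completeI:
  assumes "\<And>w. w \<in> lists S \<Longrightarrow> r_complete_at S R w"
  shows "r_complete S R"
  unfolding r_complete_def
proof (intro ballI impI)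
  fix u v u' v'
  assume l: "u \<in> lists S" "v \<in> lists S" "u' \<in> lists S" "v' \<in> lists S"
    and "pcong R (u @ v') (v @ u')"
  then have "factors_through_diagram S R u v v' u'"
    using assms by (intro r_complete_atD[of S R "u @ v'"]) (auto intro: pcong.refl pcong.sym)
  then obtain v'' u'' w where "rev_diagram S R u v v'' u''" "w \<in> lists S"
    "pcong R v' (v'' @ w)" "pcong R u' (u'' @ w)"
    unfolding factors_through_diagram_def by blast
  then show "\<exists>u''\<in>lists S. \<exists>v''\<in>lists S. \<exists>w\<in>lists S.
      reverses S R (inv_word u @ pos_word v) (pos_word v'' @ inv_word u'') \<and>
      pcong R u' (u'' @ w) \<and> pcong R v' (v'' @ w)"
    using rev_diagram_reverses rev_diagram_lists by blast
qed

lemma rev_diagram_cube_reverses: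
  assumes "rev_diagram S R [s] [r] x1 z1" "rev_diagram S R [r] [t] z2 y2" "rev_diagram S R z1 z2 x3 y3"
  shows "reverses S R [Neg s, Pos r, Neg r, Pos t] (pos_word (x1 @ x3) @ inv_word (y2 @ y3))"
proof -
  have "reverses S R [Neg s, Pos r, Neg r, Pos t] (pos_word x1 @ inv_word z1 @ [Neg r, Pos t])"
    using reverses_append_context[OF rev_diagram_reverses[OF assms(1)], of "[]" "[Neg r, Pos t]"] by simp
  also have "reverses S R \<dots> (pos_word x1 @ inv_word z1 @ pos_word z2 @ inv_word y2)"
    using reverses_append_context[OF rev_diagram_reverses[OF assms(2)], of "pos_word x1 @ inv_word z1" "[]"]
    by simp
  also have "reverses S R \<dots> (pos_word x1 @ pos_word x3 @ inv_word y3 @ inv_word y2)"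
    using reverses_append_context[OF rev_diagram_reverses[OF assms(3)], of "pos_word x1" "inv_word y2"]
    by simp
  finally show ?thesis by simp
qed

lemma no_one_completion_reverses:
  assumes "\<nexists>R'. one_completion S R R'" "s \<in> S" "t \<in> S" "r \<in> S" "u \<in> lists S" "v \<in> lists S"
    and "reverses S R [Neg s, Pos r, Neg r, Pos t] (pos_word v @ inv_word u)"
  shows "reverses S R (inv_word v @ [Neg s, Pos t] @ pos_word u) []"
  using assms unfolding one_completion_def by blast

text \<open>Without 1-completions, the cube condition glues the squares of \<open>s\<inverse> r\<close> and \<open>r\<inverse> t\<close>
  into one of \<open>s\<inverse> t\<close>; the third face of the cube comes from completeness at \<open>z\<close>.\<close>

lemma factors_through_diagram_letter_trans:
  assumes no_completion: "\<nexists>R'. one_completion S R R'"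
    and letters: "s \<in> S" "r \<in> S" "t \<in> S" and z: "r_complete_at S R z"
    and "factors_through_diagram S R [s] [r] p z" "factors_through_diagram S R [r] [t] z q"
  shows "factors_through_diagram S R [s] [t] p q"
proof -
  obtain x1 z1 f1 where d1: "rev_diagram S R [s] [r] x1 z1" "f1 \<in> lists S"
    and p: "pcong R p (x1 @ f1)" and z1: "pcong R z (z1 @ f1)"
    using assms(6) unfolding factors_through_diagram_def by blast
  obtain z2 y2 f2 where d2: "rev_diagram S R [r] [t] z2 y2" "f2 \<in> lists S"
    and z2: "pcong R z (z2 @ f2)" and q: "pcong R q (y2 @ f2)"
    using assms(7) unfolding factors_through_diagram_def by blast
  have "factors_through_diagram S R z1 z2 f1 f2"
    using r_complete_atD[OF z _ _ d1(2) d2(2) pcong.sym[OF z1] pcong.sym[OF z2]]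
      rev_diagram_lists[OF d1(1)] rev_diagram_lists[OF d2(1)] by blast
  then obtain x3 y3 g where d3: "rev_diagram S R z1 z2 x3 y3" "g \<in> lists S"
    and f1: "pcong R f1 (x3 @ g)" and f2: "pcong R f2 (y3 @ g)"
    unfolding factors_through_diagram_def by blast
  have l: "x1 @ x3 \<in> lists S" "y2 @ y3 \<in> lists S"
    using rev_diagram_lists[OF d1(1)] rev_diagram_lists[OF d2(1)] rev_diagram_lists[OF d3(1)] by auto
  have "reverses S R (inv_word (x1 @ x3) @ [Neg s, Pos t] @ pos_word (y2 @ y3)) []"
    using no_one_completion_reverses[OF no_completion letters(1,3,2) l(2,1)]
      rev_diagram_cube_reverses[OF d1(1) d2(1) d3(1)] by blast
  then have "rev_diagram S R ([s] @ x1 @ x3) ([t] @ y2 @ y3) [] []"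
    by (intro reverses_rev_diagram) (auto simp: inv_word_Cons pos_word_Cons)
  moreover have "pcong R p (x1 @ x3 @ g)" "pcong R q (y2 @ y3 @ g)"
    using pcong.trans[OF p pcong.mult_left[OF f1]] pcong.trans[OF q pcong.mult_left[OF f2]] by auto
  ultimately show ?thesis
    using factors_through_diagram_extend[OF factors_through_diagram_if_rev_diagram_Nil d3(2)] by simp
qed

definition left_homogeneous_via :: "'a set \<Rightarrow> 'a list uprod set \<Rightarrow> 'o rel \<Rightarrow> ('a list \<Rightarrow> 'o) \<Rightarrow> bool" where
  "left_homogeneous_via S R r lam \<longleftrightarrow> Well_order r \<and> (\<forall>u\<in>lists S. lam u \<in> Field r) \<and>
     (\<forall>u\<in>lists S. \<forall>v\<in>lists S. pcong R u v \<longrightarrow> lam u = lam v) \<and>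
     (\<forall>s\<in>S. \<forall>u\<in>lists S. (lam u, lam (s # u)) \<in> r \<and> lam u \<noteq> lam (s # u))"

lemma homogeneous_via_left: "homogeneous_via S R r lam mu \<Longrightarrow> left_homogeneous_via S R r lam"
  unfolding homogeneous_via_def left_homogeneous_via_def by blast

lemma left_homogeneous_via_transfer:
  assumes "\<And>u v. pcong R' u v \<longleftrightarrow> pcong R u v" "left_homogeneous_via S R r lam"
  shows "left_homogeneous_via S R' r lam"
  using assms unfolding left_homogeneous_via_def by simp

lemma left_homogeneous_via_pcong:
  "left_homogeneous_via S R r lam \<Longrightarrow> u \<in> lists S \<Longrightarrow> v \<in> lists S \<Longrightarrow> pcong R u v \<Longrightarrow> lam u = lam v"
  unfolding left_homogeneous_via_def by blast

lemma left_homogeneous_via_Cons: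
  "left_homogeneous_via S R r lam \<Longrightarrow> s \<in> S \<Longrightarrow> u \<in> lists S \<Longrightarrow> (lam u, lam (s # u)) \<in> r - Id"
  unfolding left_homogeneous_via_def by blast

lemma left_homogeneous_via_append:
  assumes hom: "left_homogeneous_via S R r lam" and "p \<in> lists S" "u \<in> lists S"
  shows "(lam u, lam (p @ u)) \<in> r"
  using assms(2)
proof (induction p)
  case Nil
  have "Refl r" "lam u \<in> Field r"
    using hom assms(3) unfolding left_homogeneous_via_def order_on_defs by auto
  then show ?case
    by (simp add: refl_onD)
next
  case (Cons s p)
  have "trans r"
    using hom unfolding left_homogeneous_via_def order_on_defs by blast
  moreover have "(lam (p @ u), lam (s # p @ u)) \<in> r"
    using left_homogeneous_via_Cons[OF hom, of s "p @ u"] Cons assms(3) by auto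
  ultimately show ?case
    using Cons by (auto dest: transD)
qed

lemma Well_order_le_less_trans:
  "Well_order r \<Longrightarrow> (a, b) \<in> r \<Longrightarrow> (b, c) \<in> r - Id \<Longrightarrow> (a, c) \<in> r - Id"
  unfolding order_on_defs trans_def antisym_def by blast

text \<open>Follow a chain of rewriting steps from \<open>s p\<close> to \<open>t q\<close>; every word \<open>r z\<close> of the chain
  has the height of \<open>w\<close>, so \<open>z\<close> is strictly lower.\<close>

lemma letters_factor_through_diagram:
  assumes pos: "positive_relations S R" and hom: "left_homogeneous_via S R r lam"
    and no_completion: "\<nexists>R'. one_completion S R R'"
    and below: "\<And>w'. w' \<in> lists S \<Longrightarrow> (lam w', lam w) \<in> r - Id \<Longrightarrow> r_complete_at S R w'"
    and sp: "s # p \<in> lists S" and w: "pcong R (s # p) w" "pcong R (t # q) w"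
  shows "factors_through_diagram S R [s] [t] p q"
proof -
  have "(rewrite_step R)\<^sup>*\<^sup>* (s # p) (t # q)"
    using w by (intro pcong_rewrites) (blast intro: pcong.trans pcong.sym)
  then show ?thesis
  proof (induction "t # q" arbitrary: t q rule: rtranclp_induct)
    case base
    then show ?case
      using sp pcong.refl[of R p] rev_diagram.cancel[of s S R]
      unfolding factors_through_diagram_def by fastforce
  next
    case (step m)
    have sm: "pcong R (s # p) m"
      using step.hyps(1) by (rule rewrites_pcong)
    have mtq: "pcong R m (t # q)"
      using step.hyps(2) by (rule rewrite_step_pcong)
    have m: "m \<in> lists S" "t # q \<in> lists S"
      using pcong_lists[OF pos sm] pcong_lists[OF pos mtq] sp by simp_all
    have "lam m = lam w"
      using left_homogeneous_via_pcong[OF hom m(1)] pcong_lists[OF pos w(1)] sp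
        pcong.trans[OF pcong.sym[OF sm] w(1)] by blast
    obtain r' z where rz: "m = r' # z"
      using step.hyps(2) positive_relationsD[OF pos] unfolding rewrite_step_def
      by (cases m) fastforce+
    have "r_complete_at S R z"
      using below left_homogeneous_via_Cons[OF hom, of r' z] \<open>lam m = lam w\<close> m rz by auto
    moreover have "factors_through_diagram S R [r'] [t] z q"
      using factors_through_diagram_rewrite_step[OF pos] step.hyps(2) m rz by simp
    ultimately show ?case
      using factors_through_diagram_letter_trans[OF no_completion, of s r' t z p q] step.hyps(3) sp m rz
      by simp
  qed
qed

text \<open>The word case: the diagram of \<open>s\<inverse> t\<close> is completed to one of \<open>(s u\<^sub>1)\<inverse> (t v\<^sub>1)\<close> by
  three squares, each closed by completeness at a word lower than \<open>w\<close>.\<close>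

lemma factors_through_diagram_Cons:
  assumes hom: "left_homogeneous_via S R r lam"
    and below: "\<And>w'. w' \<in> lists S \<Longrightarrow> (lam w', lam w) \<in> r - Id \<Longrightarrow> r_complete_at S R w'"
    and l: "u1 \<in> lists S" "v1 \<in> lists S" "x \<in> lists S" "y \<in> lists S"
    and ux_below: "(lam (u1 @ x), lam w) \<in> r - Id" and vy_below: "(lam (v1 @ y), lam w) \<in> r - Id"
    and "factors_through_diagram S R [s] [t] (u1 @ x) (v1 @ y)"
  shows "factors_through_diagram S R (s # u1) (t # v1) x y"
proof -
  obtain x2 y2 f where d1: "rev_diagram S R [s] [t] x2 y2" "f \<in> lists S"
    and x2: "pcong R (u1 @ x) (x2 @ f)" and y2: "pcong R (v1 @ y) (y2 @ f)"
    using assms(9) unfolding factors_through_diagram_def by blast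
  have x2y2: "x2 \<in> lists S" "y2 \<in> lists S"
    using rev_diagram_lists[OF d1(1)] by auto
  have "factors_through_diagram S R u1 x2 x f"
    using r_complete_atD[OF below[OF _ ux_below], of u1 x2 x f] l x2y2 d1(2)
      pcong.refl[of R "u1 @ x"] pcong.sym[OF x2] by simp
  then obtain x3 y3 g where d2: "rev_diagram S R u1 x2 x3 y3" "g \<in> lists S"
    and x3: "pcong R x (x3 @ g)" and y3: "pcong R f (y3 @ g)"
    unfolding factors_through_diagram_def by blast
  have "factors_through_diagram S R y2 v1 f y"
    using r_complete_atD[OF below[OF _ vy_below], of y2 v1 f y] l x2y2 d1(2)
      pcong.refl[of R "v1 @ y"] pcong.sym[OF y2] by simp
  then obtain x4 y4 h where d3: "rev_diagram S R y2 v1 x4 y4" "h \<in> lists S"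
    and x4: "pcong R f (x4 @ h)" and y4: "pcong R y (y4 @ h)"
    unfolding factors_through_diagram_def by blast
  have "(lam f, lam (x2 @ f)) \<in> r"
    using left_homogeneous_via_append[OF hom x2y2(1) d1(2)] .
  moreover have "lam (x2 @ f) = lam (u1 @ x)"
    using left_homogeneous_via_pcong[OF hom _ _ pcong.sym[OF x2]] l x2y2 d1(2) by simp
  moreover have "Well_order r"
    using hom unfolding left_homogeneous_via_def by blast
  ultimately have f_below: "(lam f, lam w) \<in> r - Id"
    using Well_order_le_less_trans ux_below by metis
  have "y3 \<in> lists S" "x4 \<in> lists S"
    using rev_diagram_lists[OF d2(1)] rev_diagram_lists[OF d3(1)] by auto
  then have "factors_through_diagram S R y3 x4 g h"
    using r_complete_atD[OF below[OF d1(2) f_below], of y3 x4 g h] d2(2) d3(2)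
      pcong.sym[OF y3] pcong.sym[OF x4] by simp
  then obtain x5 y5 k where d4: "rev_diagram S R y3 x4 x5 y5" "k \<in> lists S"
    and "pcong R g (x5 @ k)" "pcong R h (y5 @ k)"
    unfolding factors_through_diagram_def by blast
  then have "pcong R x ((x3 @ x5) @ k)" "pcong R y ((y4 @ y5) @ k)"
    using pcong.trans[OF x3 pcong.mult_left] pcong.trans[OF y4 pcong.mult_left] by simp_all
  moreover have "rev_diagram S R ([s] @ u1) ([t] @ v1) (x3 @ x5) (y4 @ y5)"
    using rev_diagram_grid[OF d1(1) d3(1) d2(1) d4(1)] .
  ultimately show ?thesis
    using d4(2) unfolding factors_through_diagram_def by (metis append_Cons append_Nil)
qed

lemma r_complete_at_if_below:
  assumes pos: "positive_relations S R" and hom: "left_homogeneous_via S R r lam"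
    and no_completion: "\<nexists>R'. one_completion S R R'"
    and below: "\<And>w'. w' \<in> lists S \<Longrightarrow> (lam w', lam w) \<in> r - Id \<Longrightarrow> r_complete_at S R w'"
  shows "r_complete_at S R w"
  unfolding r_complete_at_def
proof (intro ballI impI)
  fix u v x y
  assume l: "u \<in> lists S" "v \<in> lists S" "x \<in> lists S" "y \<in> lists S"
    and ux: "pcong R (u @ x) w" and vy: "pcong R (v @ y) w"
  have xy: "pcong R (u @ x) (v @ y)"
    using ux vy by (blast intro: pcong.trans pcong.sym)
  show "factors_through_diagram S R u v x y"
  proof (cases "u = [] \<or> v = []")
    case True
    then show ?thesis
      using l xy rev_diagram.Nil_left[of v S R] rev_diagram.Nil_right[of u S R]
        pcong.refl[of R x] pcong.refl[of R y] pcong.sym[OF xy]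
      unfolding factors_through_diagram_def by fastforce
  next
    case False
    then obtain s u1 t v1 where uv: "u = s # u1" "v = t # v1"
      by (cases u; cases v) auto
    have "w \<in> lists S"
      using pcong_lists[OF pos ux] l by simp
    then have "lam (s # u1 @ x) = lam w" "lam (t # v1 @ y) = lam w"
      using l ux vy uv left_homogeneous_via_pcong[OF hom] by simp_all
    then have "(lam (u1 @ x), lam w) \<in> r - Id" "(lam (v1 @ y), lam w) \<in> r - Id"
      using l uv left_homogeneous_via_Cons[OF hom, of s "u1 @ x"]
        left_homogeneous_via_Cons[OF hom, of t "v1 @ y"] by auto
    moreover have "factors_through_diagram S R [s] [t] (u1 @ x) (v1 @ y)"
      using letters_factor_through_diagram[OF pos hom no_completion below] l ux vy uv by simp
    ultimately show ?thesis
      using factors_through_diagram_Cons[OF hom below] l uv by simp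
  qed
qed

theorem r_complete_if_no_one_completion:
  assumes pos: "positive_relations S R" and hom: "left_homogeneous_via S R r lam"
    and no_completion: "\<nexists>R'. one_completion S R R'"
  shows "r_complete S R"
proof (rule r_completeI)
  have wf: "wf (inv_image (r - Id) lam)"
    using hom unfolding left_homogeneous_via_def well_order_on_def by (blast intro: wf_inv_image)
  show "r_complete_at S R w" for w
    by (induction w rule: wf_induct_rule[OF wf]) (auto intro: r_complete_at_if_below[OF pos hom no_completion])
qed

section \<open>Invariants of r-completing sequences\<close>

lemma one_completionE:
  assumes "one_completion S R R'"
  obtains s t u v where "R' = insert (Upair (s # v) (t # u)) R" "s \<in> S" "t \<in> S" "u \<in> lists S"
    "v \<in> lists S" "pcong R (s # v) (t # u)" "Upair (s # v) (t # u) \<notin> R"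
proof -
  obtain s t r u v where h: "s \<in> S" "t \<in> S" "r \<in> S" "u \<in> lists S" "v \<in> lists S"
    "R' = insert (Upair (s # v) (t # u)) R"
    "reverses S R [Neg s, Pos r, Neg r, Pos t] (pos_word v @ inv_word u)"
    "\<not> reverses S R (inv_word v @ [Neg s, Pos t] @ pos_word u) []"
    using assms unfolding one_completion_def by blast
  have "rev_eval S R [Neg s, Pos r, Neg r, Pos t] [] [] v u"
    using reverses_rev_eval[OF h(7,5,4)] .
  then obtain a c c' where d: "rev_diagram S R [r] [t] a c" "rev_diagram S R [s] (r # a) v c'"
    and u: "u = c @ c'"
    by auto
  have "pcong R (s # v) (r # a @ c')"
    using rev_diagram_pcong[OF d(2)] by simp
  also have "pcong R (r # a @ c') (t # u)"
    using pcong.mult_right[OF rev_diagram_pcong[OF d(1)], of c'] u by simp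
  finally have "pcong R (s # v) (t # u)" .
  moreover have "Upair (s # v) (t # u) \<notin> R"
  proof
    assume "Upair (s # v) (t # u) \<in> R"
    then have "rev_diagram S R (s # v) (t # u) [] []"
      using h by (intro rev_diagram_relation) auto
    with h(8) show False
      using rev_diagram_reverses by (fastforce simp: inv_word_Cons pos_word_Cons)
  qed
  ultimately show thesis
    using that h by blast
qed

lemma one_completion_subset: "one_completion S R R' \<Longrightarrow> R \<subseteq> R'"
  by (erule one_completionE) auto

lemma Well_order_induct_zero_succ_limit:
  assumes wo: "Well_order t" and "x \<in> Field t"
    and zero: "\<And>x. wo_is_zero t x \<Longrightarrow> P x"
    and succ: "\<And>x y. wo_is_succ t y x \<Longrightarrow> P y \<Longrightarrow> P x"
    and limit: "\<And>x. wo_is_limit t x \<Longrightarrow> (\<And>y. wo_less t y x \<Longrightarrow> P y) \<Longrightarrow> P x"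
  shows "P x"
proof -
  have "wf (t - Id)"
    using wo unfolding well_order_on_def by blast
  then have "x \<in> Field t \<longrightarrow> P x"
  proof (induction x rule: wf_induct_rule)
    case (less x)
    have IH: "P y" if "wo_less t y x" for y
      using less that unfolding wo_less_def by (blast intro: FieldI1)
    show ?case
    proof
      assume "x \<in> Field t"
      then consider "wo_is_zero t x" | y where "wo_is_succ t y x" | "wo_is_limit t x"
        unfolding wo_is_limit_def by blast
      then show "P x"
        by cases (auto intro: zero succ limit IH simp: wo_is_succ_def)
    qed
  qed
  with assms(2) show ?thesis by blast
qed

lemma Well_order_less_succ:
  assumes "Well_order t" "wo_is_succ t y x" "wo_less t z x"
  shows "(z, y) \<in> t"
  using assms unfolding wo_is_succ_def wo_less_def order_on_defs refl_on_def total_on_def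
  by (metis FieldI1)

lemma r_completing_seq_induct [consumes 2, case_names zero succ limit]:
  assumes "r_completing_seq S R t Rs" "x \<in> Field t"
    and "\<And>x. wo_is_zero t x \<Longrightarrow> Rs x = R \<Longrightarrow> P x"
    and "\<And>x y. wo_is_succ t y x \<Longrightarrow> one_completion S (Rs y) (Rs x) \<Longrightarrow> P y \<Longrightarrow> P x"
    and "\<And>x. wo_is_limit t x \<Longrightarrow> Rs x = (\<Union>y\<in>{y. wo_less t y x}. Rs y) \<Longrightarrow>
      (\<And>y. wo_less t y x \<Longrightarrow> P y) \<Longrightarrow> P x"
  shows "P x"
proof -
  have wo: "Well_order t"
    and zero: "\<And>x. wo_is_zero t x \<Longrightarrow> Rs x = R"
    and succ: "\<And>x y. wo_is_succ t x y \<Longrightarrow> one_completion S (Rs x) (Rs y)"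
    and limit: "\<And>x. wo_is_limit t x \<Longrightarrow> Rs x = (\<Union>y\<in>{y. wo_less t y x}. Rs y)"
    using assms(1) unfolding r_completing_seq_def by blast+
  show ?thesis
  proof (rule Well_order_induct_zero_succ_limit[OF wo assms(2)])
    show "P x" if "wo_is_zero t x" for x
      using assms(3)[OF that zero[OF that]] .
    show "P x" if "wo_is_succ t y x" "P y" for x y
      using assms(4)[OF that(1) succ[OF that(1)] that(2)] .
    show "P x" if "wo_is_limit t x" "\<And>y. wo_less t y x \<Longrightarrow> P y" for x
      using assms(5)[OF that(1) limit[OF that(1)] that(2)] .
  qed
qed

lemma r_completing_seq_mono:
  assumes seq: "r_completing_seq S R t Rs" and "x \<in> Field t" "(y, x) \<in> t"
  shows "Rs y \<subseteq> Rs x"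
  using seq assms(2,3)
proof (induction x arbitrary: y rule: r_completing_seq_induct)
  case (zero x)
  then show ?case
    unfolding wo_is_zero_def wo_less_def by blast
next
  case (succ x y')
  have "Rs y' \<subseteq> Rs x"
    using succ.hyps(2) by (rule one_completion_subset)
  moreover have "(y, y') \<in> t" if "y \<noteq> x"
    using Well_order_less_succ[OF _ succ.hyps(1)] seq succ.prems that
    unfolding r_completing_seq_def wo_less_def by blast
  moreover have "y' \<in> Field t"
    using succ.hyps(1) unfolding wo_is_succ_def wo_less_def by (blast intro: FieldI1)
  ultimately show ?case
    using succ.IH by blast
next
  case (limit x)
  then show ?case
    unfolding wo_less_def by blast
qed

lemma r_completing_seq_base:
  assumes seq: "r_completing_seq S R t Rs" and "x \<in> Field t"
  shows "R \<subseteq> Rs x"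
  using seq assms(2)
proof (induction x rule: r_completing_seq_induct)
  case (succ x y)
  then show ?case
    using one_completion_subset by blast
next
  case (limit x)
  then obtain y where "wo_less t y x"
    unfolding wo_is_limit_def wo_is_zero_def by blast
  with limit show ?case
    by blast
qed simp

lemma r_completing_seq_relations:
  assumes pos: "positive_relations S R" and seq: "r_completing_seq S R t Rs" and "x \<in> Field t"
  shows "positive_relations S (Rs x) \<and> (\<forall>a b. Upair a b \<in> Rs x \<longrightarrow> pcong R a b)"
  using seq assms(3)
proof (induction x rule: r_completing_seq_induct)
  case (zero x)
  then show ?case
    using pos by (auto intro: pcong.base)
next
  case (succ x y)
  from succ.hyps(2) obtain s t u v where
    x: "Rs x = insert (Upair (s # v) (t # u)) (Rs y)" "s \<in> S" "t \<in> S" "u \<in> lists S" "v \<in> lists S"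
    and "pcong (Rs y) (s # v) (t # u)"
    by (rule one_completionE)
  then have "pcong R (s # v) (t # u)"
    using succ.IH pcong_subrelation by blast
  with x succ.IH show ?case
    unfolding positive_relations_def by (auto intro: pcong.sym)
next
  case (limit x)
  then show ?case
    unfolding positive_relations_def by blast
qed

lemma r_completing_seq_pcong_iff:
  assumes "positive_relations S R" "r_completing_seq S R t Rs" "x \<in> Field t"
  shows "pcong (Rs x) u v \<longleftrightarrow> pcong R u v"
  using r_completing_seq_relations[OF assms] r_completing_seq_base[OF assms(2,3)]
  by (blast intro: pcong_subrelation pcong_mono)

section \<open>Length of r-completing sequences\<close>

lemma Well_order_succ_exists:
  assumes wo: "Well_order t" and "wo_less t x y"
  obtains m where "wo_is_succ t x m" "\<And>z. wo_less t x z \<Longrightarrow> (m, z) \<in> t"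
proof -
  have "wf (t - Id)"
    using wo unfolding well_order_on_def by blast
  then obtain m where m: "wo_less t x m" and min: "\<And>z. (z, m) \<in> t - Id \<Longrightarrow> \<not> wo_less t x z"
    using assms(2) wf_eq_minimal[of "t - Id"] by (metis mem_Collect_eq)
  have "(m, z) \<in> t" if "wo_less t x z" for z
    using wo m that min unfolding wo_less_def order_on_defs refl_on_def total_on_def
    by (metis DiffI FieldI2 IdD)
  moreover have "wo_is_succ t x m"
    using m min unfolding wo_is_succ_def wo_less_def by blast
  ultimately show thesis
    using that by blast
qed

lemma r_completing_seq_new_relation:
  assumes seq: "r_completing_seq S R t Rs" and "wo_less t x y"
  obtains a b where "a \<noteq> []" "a \<in> lists S" "b \<in> lists S" "Upair a b \<notin> Rs x"
    "\<And>z. wo_less t x z \<Longrightarrow> Upair a b \<in> Rs z"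
proof -
  have wo: "Well_order t"
    using seq unfolding r_completing_seq_def by blast
  obtain m where m: "wo_is_succ t x m" "\<And>z. wo_less t x z \<Longrightarrow> (m, z) \<in> t"
    using Well_order_succ_exists[OF wo assms(2)] by blast
  have "one_completion S (Rs x) (Rs m)"
    using seq m(1) unfolding r_completing_seq_def by blast
  then obtain s t' u v where "Rs m = insert (Upair (s # v) (t' # u)) (Rs x)" "s \<in> S" "t' \<in> S"
    "u \<in> lists S" "v \<in> lists S" "Upair (s # v) (t' # u) \<notin> Rs x"
    by (rule one_completionE)
  moreover have "Rs m \<subseteq> Rs z" if "wo_less t x z" for z
    using r_completing_seq_mono[OF seq _ m(2)[OF that]] that unfolding wo_less_def by (blast intro: FieldI2)
  ultimately show thesis
    using that[of "s # v" "t' # u"] by auto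
qed

context
  includes cardinal_syntax
begin

lemma r_completing_seq_card_of_Field:
  assumes seq: "r_completing_seq S R t Rs"
  shows "|Field t| \<le>o |lists S \<times> lists S|"
proof -
  define new where "new x p \<longleftrightarrow> fst p \<noteq> [] \<and> p \<in> lists S \<times> lists S \<and>
    Upair (fst p) (snd p) \<notin> Rs x \<and> (\<forall>z. wo_less t x z \<longrightarrow> Upair (fst p) (snd p) \<in> Rs z)" for x p
  \<comment> \<open>\<open>([], [])\<close> is never new, so it can serve as the image of a last element.\<close>
  define g where "g x = (if \<exists>y. wo_less t x y then SOME p. new x p else ([], []))" for x
  have new: "new x (g x)" if less: "wo_less t x y" for x y
  proof -
    obtain a b where "a \<noteq> []" "a \<in> lists S" "b \<in> lists S" "Upair a b \<notin> Rs x"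
      "\<And>z. wo_less t x z \<Longrightarrow> Upair a b \<in> Rs z"
      using r_completing_seq_new_relation[OF seq less] by blast
    then have "new x (a, b)"
      unfolding new_def by simp
    then show ?thesis
      using less unfolding g_def by (auto intro: someI)
  qed
  have "g a \<noteq> g b" if ab: "wo_less t a b" for a b
  proof (cases "\<exists>y. wo_less t b y")
    case True
    then have "Upair (fst (g b)) (snd (g b)) \<notin> Rs b"
      using new unfolding new_def by blast
    then show ?thesis
      using new[OF ab] ab unfolding new_def by auto
  next
    case False
    then have "g b = ([], [])"
      unfolding g_def by auto
    moreover have "fst (g a) \<noteq> []"
      using new[OF ab] unfolding new_def by blast
    ultimately show ?thesis
      by auto
  qed
  then have "inj_on g (Field t)"
    using seq unfolding inj_on_def r_completing_seq_def wo_less_def order_on_defs total_on_def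
    by metis
  moreover have "g x \<in> lists S \<times> lists S" for x
  proof (cases "\<exists>y. wo_less t x y")
    case True
    then show ?thesis
      using new unfolding new_def by blast
  qed (simp add: g_def)
  ultimately show ?thesis
    using card_of_ordLeq by blast
qed

lemma card_of_lists_le_infinite:
  assumes inf: "infinite S"
  shows "|lists S| \<le>o |S|"
proof -
  define L where "L n = {xs \<in> lists S. length xs = n}" for n
  have L: "|L n| \<le>o |S|" for n
  proof (induction n)
    case 0
    obtain s where "s \<in> S"
      using inf by (metis ex_in_conv finite.emptyI)
    then show ?case
      by (intro card_of_ordLeqI[of "\<lambda>_. s"]) (auto simp: L_def inj_on_def)
  next
    case (Suc n)
    have "inj_on (\<lambda>xs. (hd xs, tl xs)) (L (Suc n))"
    proof (rule inj_onI)
      fix xs ys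
      assume "xs \<in> L (Suc n)" "ys \<in> L (Suc n)" "(hd xs, tl xs) = (hd ys, tl ys)"
      then show "xs = ys"
        unfolding L_def by (cases xs; cases ys) simp_all
    qed
    moreover have "(\<lambda>xs. (hd xs, tl xs)) ` L (Suc n) \<subseteq> S \<times> L n"
      by (auto simp: L_def length_Suc_conv)
    ultimately have "|L (Suc n)| \<le>o |S \<times> L n|"
      using card_of_ordLeq by blast
    also have "|S \<times> L n| \<le>o |S \<times> S|"
      using card_of_Times_mono2[OF Suc.IH] .
    also have "|S \<times> S| =o |S|"
      using card_of_Times_same_infinite[OF inf] .
    finally show ?case .
  qed
  have "|\<Union>n. L n| \<le>o |S|"
  proof (rule card_of_UNION_ordLeq_infinite[OF inf])
    show "|UNIV :: nat set| \<le>o |S|"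
      using inf infinite_iff_card_of_nat by blast
  qed (use L in blast)
  moreover have "lists S = (\<Union>n. L n)"
    unfolding L_def by auto
  ultimately show ?thesis
    by simp
qed

lemma Well_order_ordLess_cardSuc:
  assumes wo: "Well_order t" and k: "Card_order k" and le: "|Field t| \<le>o k"
  shows "t <o cardSuc k"
proof (rule ccontr)
  assume "\<not> t <o cardSuc k"
  then have "cardSuc k \<le>o t"
    using not_ordLess_iff_ordLeq[OF cardSuc_Well_order[OF k] wo] by simp
  then have "|Field (cardSuc k)| \<le>o |Field t|"
    by (rule card_of_mono2)
  then have "cardSuc k \<le>o k"
    using card_of_Field_ordIso[OF cardSuc_Card_order[OF k]] le
    by (meson ordIso_ordLeq_trans ordIso_symmetric ordLeq_transitive)
  then show False
    using not_ordLess_ordLeq[OF cardSuc_greater[OF k]] by blast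
qed

lemma r_completing_seq_length:
  assumes seq: "r_completing_seq S R t Rs"
  shows "t <o cardSuc |S| \<or> t <o cardSuc natLeq"
proof -
  have wo: "Well_order t"
    using seq unfolding r_completing_seq_def by blast
  have F: "|Field t| \<le>o |lists S \<times> lists S|"
    by (rule r_completing_seq_card_of_Field[OF seq])
  show ?thesis
  proof (cases "finite S")
    case True
    then have "countable (lists S \<times> lists S)"
      by (auto intro: countable_finite)
    then obtain f :: "_ \<Rightarrow> nat" where "inj_on f (lists S \<times> lists S)"
      unfolding countable_def by blast
    then have "|lists S \<times> lists S| \<le>o |UNIV :: nat set|"
      using card_of_ordLeq by blast
    then have "|lists S \<times> lists S| \<le>o natLeq"
      using card_of_nat by (rule ordLeq_ordIso_trans)
    then show ?thesis
      using Well_order_ordLess_cardSuc[OF wo natLeq_Card_order] F ordLeq_transitive by blast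
  next
    case False
    have "|lists S \<times> lists S| \<le>o |S \<times> S|"
      using card_of_Times_mono1[OF card_of_lists_le_infinite[OF False]]
        card_of_Times_mono2[OF card_of_lists_le_infinite[OF False]] ordLeq_transitive by blast
    then have "|lists S \<times> lists S| \<le>o |S|"
      using card_of_Times_same_infinite[OF False] ordLeq_ordIso_trans by blast
    then show ?thesis
      using Well_order_ordLess_cardSuc[OF wo card_of_Card_order] F ordLeq_transitive by blast
  qed
qed

end

section \<open>Appending a last term\<close>

definition add_top :: "'i rel \<Rightarrow> 'i option rel" where
  "add_top t = map_prod Some Some ` t \<union> (\<lambda>a. (a, None)) ` insert None (Some ` Field t)"

lemma mem_add_top [simp]:
  "(Some a, Some b) \<in> add_top t \<longleftrightarrow> (a, b) \<in> t"
  "(None, Some b) \<notin> add_top t"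
  "(p, None) \<in> add_top t \<longleftrightarrow> p = None \<or> (\<exists>a. p = Some a \<and> a \<in> Field t)"
  unfolding add_top_def by auto

lemma Field_add_top: "Field (add_top t) = insert None (Some ` Field t)"
  unfolding add_top_def Field_def by auto

lemma Well_order_add_top:
  assumes wo: "Well_order t"
  shows "Well_order (add_top t)"
proof -
  have "Refl t" "trans t" "antisym t" "Total t"
    using wo unfolding order_on_defs by auto
  have "Refl (add_top t)"
    using \<open>Refl t\<close> by (auto simp: Field_add_top refl_on_def)
  moreover have "trans (add_top t)"
  proof (rule transI)
    fix x y z
    assume "(x, y) \<in> add_top t" "(y, z) \<in> add_top t"
    then show "(x, z) \<in> add_top t"
      using \<open>trans t\<close> by (cases x; cases y; cases z) (auto dest: transD intro: FieldI1)
  qed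
  moreover have "antisym (add_top t)"
  proof (rule antisymI)
    fix x y
    assume "(x, y) \<in> add_top t" "(y, x) \<in> add_top t"
    then show "x = y"
      using \<open>antisym t\<close> by (cases x; cases y) (auto dest: antisymD)
  qed
  moreover have "Total (add_top t)"
    using \<open>Total t\<close> by (auto simp: Field_add_top total_on_def)
  ultimately have lin: "Linear_order (add_top t)"
    unfolding order_on_defs by (auto intro: FieldI1 FieldI2)
  have "add_top t - Id \<subseteq> map_prod Some Some ` (t - Id) \<union> {(Some a, None) | a. True}"
    unfolding add_top_def by auto
  moreover have "wf (map_prod Some Some ` (t - Id) \<union> {(Some a, None) | a. True})"
  proof (rule wf_Un)
    show "wf (map_prod Some Some ` (t - Id))"
      using wo unfolding well_order_on_def by (blast intro: wf_map_prod_image inj_Some)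
    have "{(Some a, None) | a. True} \<subseteq> measure (\<lambda>p. case p of None \<Rightarrow> 1 | Some _ \<Rightarrow> 0)"
      by auto
    then show "wf {(Some a, None) | a. True}"
      by (rule wf_subset[rotated]) simp
  qed auto
  ultimately show ?thesis
    using lin wf_subset unfolding well_order_on_def by blast
qed

lemma wo_less_add_top [simp]:
  "wo_less (add_top t) p (Some b) \<longleftrightarrow> (\<exists>a. p = Some a \<and> wo_less t a b)"
  "wo_less (add_top t) p None \<longleftrightarrow> (\<exists>a. p = Some a \<and> a \<in> Field t)"
  "\<not> wo_less (add_top t) None q"
  unfolding wo_less_def by (cases p; cases q; auto)+

definition wo_is_last :: "'i rel \<Rightarrow> 'i \<Rightarrow> bool" where
  "wo_is_last t x \<longleftrightarrow> x \<in> Field t \<and> (\<forall>y\<in>Field t. (y, x) \<in> t)"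

lemma wo_is_last_iff:
  assumes "Well_order t"
  shows "wo_is_last t x \<longleftrightarrow> x \<in> Field t \<and> \<not> (\<exists>y. wo_less t x y)"
  using assms unfolding wo_is_last_def wo_less_def order_on_defs refl_on_def total_on_def antisym_def
  by (metis FieldI2)

lemma wo_is_zero_add_top:
  "wo_is_zero (add_top t) (Some a) \<longleftrightarrow> wo_is_zero t a"
  "wo_is_zero (add_top t) None \<longleftrightarrow> Field t = {}"
  unfolding wo_is_zero_def Field_add_top by auto

lemma wo_is_succ_add_top:
  "wo_is_succ (add_top t) (Some a) (Some b) \<longleftrightarrow> wo_is_succ t a b"
  "\<not> wo_is_succ (add_top t) None q"
  "Well_order t \<Longrightarrow> wo_is_succ (add_top t) p None \<longleftrightarrow> (\<exists>a. p = Some a \<and> wo_is_last t a)"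
  unfolding wo_is_succ_def by (auto simp: split_option_ex wo_is_last_iff wo_less_def[of t] intro: FieldI2)

lemma wo_is_limit_add_top:
  "wo_is_limit (add_top t) (Some a) \<longleftrightarrow> wo_is_limit t a"
  "Well_order t \<Longrightarrow> wo_is_limit (add_top t) None \<longleftrightarrow> Field t \<noteq> {} \<and> \<not> (\<exists>a. wo_is_last t a)"
  unfolding wo_is_limit_def
  by (auto simp: Field_add_top wo_is_zero_add_top split_option_ex wo_is_succ_add_top)

lemma r_completing_seq_add_top:
  assumes seq: "r_completing_seq S R t Rs"
    and empty: "Field t = {} \<Longrightarrow> X = R"
    and last: "\<And>a. wo_is_last t a \<Longrightarrow> one_completion S (Rs a) X"
    and no_last: "Field t \<noteq> {} \<Longrightarrow> \<nexists>a. wo_is_last t a \<Longrightarrow> X = (\<Union>a\<in>Field t. Rs a)"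
  shows "r_completing_seq S R (add_top t) (case_option X Rs)"
proof -
  have wo: "Well_order t"
    and zero: "\<And>x. wo_is_zero t x \<Longrightarrow> Rs x = R"
    and succ: "\<And>x y. wo_is_succ t x y \<Longrightarrow> one_completion S (Rs x) (Rs y)"
    and limit: "\<And>x. wo_is_limit t x \<Longrightarrow> Rs x = (\<Union>y\<in>{y. wo_less t y x}. Rs y)"
    using seq unfolding r_completing_seq_def by blast+
  have "case_option X Rs p = R" if "wo_is_zero (add_top t) p" for p
    using that empty zero by (cases p) (auto simp: wo_is_zero_add_top)
  moreover have "one_completion S (case_option X Rs p) (case_option X Rs q)"
    if "wo_is_succ (add_top t) p q" for p q
    using that last succ by (cases p; cases q) (auto simp: wo_is_succ_add_top(1,2) wo_is_succ_add_top(3)[OF wo])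
  moreover have "case_option X Rs p = (\<Union>q\<in>{q. wo_less (add_top t) q p}. case_option X Rs q)"
    if "wo_is_limit (add_top t) p" for p
  proof (cases p)
    case None
    then have "{q. wo_less (add_top t) q p} = Some ` Field t"
      by auto
    then show ?thesis
      using that None no_last by (auto simp: wo_is_limit_add_top(2)[OF wo])
  next
    case (Some a)
    then have "{q. wo_less (add_top t) q p} = Some ` {b. wo_less t b a}"
      by auto
    then show ?thesis
      using that Some limit by (auto simp: wo_is_limit_add_top(1))
  qed
  ultimately show ?thesis
    unfolding r_completing_seq_def using Well_order_add_top[OF wo] by blast
qed

lemma seq_extends_add_top: "seq_extends t Rs (add_top t) (case_option X Rs)"
  unfolding seq_extends_def
proof (intro exI[of _ Some] conjI ballI allI impI)
  show "Some ` Field t \<subset> Field (add_top t)"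
    by (auto simp: Field_add_top)
next
  fix a y
  assume "a \<in> Field t" "(y, Some a) \<in> add_top t"
  then show "y \<in> Some ` Field t"
    by (cases y) (auto intro: FieldI1)
qed auto

lemma non_extendable_last:
  assumes seq: "r_completing_seq S R t Rs" and "non_extendable S R t Rs"
  obtains x where "wo_is_last t x" "\<nexists>R'. one_completion S (Rs x) R'"
proof -
  have wo: "Well_order t"
    using seq unfolding r_completing_seq_def by blast
  have no_extension: False
    if "Field t = {} \<Longrightarrow> X = R" "\<And>a. wo_is_last t a \<Longrightarrow> one_completion S (Rs a) X"
      "Field t \<noteq> {} \<Longrightarrow> \<nexists>a. wo_is_last t a \<Longrightarrow> X = (\<Union>a\<in>Field t. Rs a)" for X
  proof -
    have "r_completing_seq S R (add_top t) (case_option X Rs)"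
      by (rule r_completing_seq_add_top[OF seq]) (use that in auto)
    then show False
      using assms(2) seq_extends_add_top[of t Rs X] unfolding non_extendable_def by blast
  qed
  have "Field t \<noteq> {}"
    using no_extension[of R] unfolding wo_is_last_def by blast
  then obtain x where x: "wo_is_last t x"
    using no_extension[of "\<Union>a\<in>Field t. Rs a"] by blast
  have unique: "a = x" if "wo_is_last t a" for a
    using wo x that unfolding wo_is_last_def order_on_defs antisym_def by blast
  have "\<not> one_completion S (Rs x) R'" for R'
  proof
    assume completion: "one_completion S (Rs x) R'"
    show False
    proof (rule no_extension)
      show "Field t = {} \<Longrightarrow> R' = R"
        using x unfolding wo_is_last_def by blast
      show "one_completion S (Rs a) R'" if "wo_is_last t a" for a
        using unique[OF that] completion by simp
      show "Field t \<noteq> {} \<Longrightarrow> \<nexists>a. wo_is_last t a \<Longrightarrow> R' = (\<Union>a\<in>Field t. Rs a)"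
        using x by blast
    qed
  qed
  with x show thesis
    using that by blast
qed

theorem proposition5p3:
  fixes S :: "'a set" and R :: "'a list uprod set"
    and r :: "'o rel" and lam mu :: "'a list \<Rightarrow> 'o"
    and t :: "'i rel" and Rs :: "'i \<Rightarrow> 'a list uprod set"
  assumes pres: "positive_presentation S R"
    and hom: "homogeneous_via S R r lam mu"
    and seq: "r_completing_seq S R t Rs"
  shows "((t, cardSuc (card_of S)) \<in> ordLess \<or> (t, cardSuc natLeq) \<in> ordLess)
    \<and> (\<forall>x\<in>Field t. \<forall>u\<in>lists S. \<forall>v\<in>lists S. pcong (Rs x) u v \<longleftrightarrow> pcong R u v)
    \<and> (non_extendable S R t Rs \<longrightarrow>
           (\<exists>x\<in>Field t. (\<forall>y\<in>Field t. (y, x) \<in> t) \<and> r_complete S (Rs x) \<and>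
              (\<forall>u\<in>lists S. \<forall>v\<in>lists S. pcong (Rs x) u v \<longleftrightarrow> pcong R u v)))"
proof -
  have pos: "positive_relations S R"
    using pres by (rule positive_presentation_relations)
  have same_pcong: "pcong (Rs x) u v \<longleftrightarrow> pcong R u v" if "x \<in> Field t" for x u v
    using r_completing_seq_pcong_iff[OF pos seq that] .
  have "\<exists>x. wo_is_last t x \<and> r_complete S (Rs x)" if ne: "non_extendable S R t Rs"
  proof -
    obtain x where x: "wo_is_last t x" "\<nexists>R'. one_completion S (Rs x) R'"
      using non_extendable_last[OF seq ne] by blast
    then have xt: "x \<in> Field t"
      unfolding wo_is_last_def by blast
    have "positive_relations S (Rs x)"
      using r_completing_seq_relations[OF pos seq xt] by blast
    moreover have "left_homogeneous_via S (Rs x) r lam"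
      using left_homogeneous_via_transfer[OF same_pcong[OF xt] homogeneous_via_left[OF hom]] .
    ultimately have "r_complete S (Rs x)"
      using x(2) by (rule r_complete_if_no_one_completion)
    with x(1) show ?thesis
      by blast
  qed
  moreover have "(t, cardSuc (card_of S)) \<in> ordLess \<or> (t, cardSuc natLeq) \<in> ordLess"
    by (rule r_completing_seq_length[OF seq])
  ultimately show ?thesis
    using same_pcong unfolding wo_is_last_def by meson
qed

end
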